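(* Assume (A1), (A3), (A4), and the following weakening of (A2): (A2') $f_1,\dots,f_T:\mathbb{R}^d\to\mathbb{R}$ are convex and differentiable, and there is $G_f>0$ with $\|\nabla f_t(x)\|\le G_f$ for all $x\in\mathcal{X}$ and all $t\in[T]$. Suppose $g(x_1)\le-\alpha$ for some $\alpha\in(0,\epsilon]$. Run the Algorithm with $\rho=\alpha/\sqrt{T}$ and $\eta=\frac{\xi\rho}{G_fG_g}$. Then $$\mathrm{Reg}_T\le\Big(\frac{2G_fG_gR^2}{\xi\alpha}+\frac{G_f\xi\alpha}{2G_g}+\frac{G_f\alpha}{\sigma}\Big)\sqrt{T},$$ and $g(x_t)\le0$ for all $t\in[T]$.
   Context: Let $d,T$ be positive integers and $[T]=\{1,\dots,T\}$. Write $\|\cdot\|$ for the Euclidean norm and $\mathbb{B}=\{x\in\mathbb{R}^d:\|x\|\le1\}$. For a closed convex set $\mathcal{Y}$, $\Pi_{\mathcal{Y}}$ is the Euclidean projection onto $\mathcal{Y}$. For $a\in\mathbb{R}$, $[a]_+=\max(a,0)$. Let $g:\mathbb{R}^d\to\mathbb{R}$ be convex with subdifferential $\partial g(x)$, and set $\mathcal{X}=\{x:g(x)\le0\}$. Assumptions: (A1) there is $R>0$ with $\mathcal{X}\subseteq R\mathbb{B}$; (A3) there is $G_g>0$ with $\|s\|\le G_g$ for all $s\in\partial g(x)$ and all $x\in R\mathbb{B}$; (A4) there are $\sigma,\epsilon>0$ such that $\mathcal{X}'=\{x:g(x)=-\epsilon\}$ is nonempty and $\|s\|\ge\sigma$ for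 all $s\in\partial g(x)$ and all $x\in\mathcal{X}'$. Algorithm (OGD with Polyak feasibility steps). Inputs are $x_1\in\mathbb{R}^d$, $\eta>0$ and $\rho\ge0$. For $t=1,\dots,T$: - play $x_t$ and then receive $f_t$; the functions may be chosen adversarially and may depend on past actions; - query $g_t=g(x_t)$ and some $s_t\in\partial g(x_t)$; - set $y_t=x_t-\eta\nabla f_t(x_t)$; - if $s_t\ne0$, set $x_{t+1}=\Pi_{R\mathbb{B}}\big(y_t-\frac{[g_t+s_t^\top(y_t-x_t)+\rho]_+}{\|s_t\|^2}s_t\big)$; if $s_t=0$, set $x_{t+1}=\Pi_{R\mathbb{B}}(y_t)$. Regret is $\mathrm{Reg}_T=\sum_{t=1}^Tf_t(x_t)-\min_{x\in\mathcal{X}}\sum_{t=1}^Tf_t(x)$. Also $\gamma=1-\sigma^2/G_g^2$ and $\xi=1-\sqrt{\gamma}$. *)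

theory Defs
  imports "HOL-Analysis.Analysis"
begin

definition subdiff :: "('a::real_inner \<Rightarrow> real) \<Rightarrow> 'a \<Rightarrow> 'a set" where
  "subdiff g x = {s. \<forall>y. g y \<ge> g x + inner s (y - x)}"

definition pos_part :: "real \<Rightarrow> real" where
  "pos_part a = max a 0"

definition ogd_polyak_step ::
  "real \<Rightarrow> real \<Rightarrow> real \<Rightarrow> ('a::euclidean_space \<Rightarrow> real) \<Rightarrow> 'a \<Rightarrow> 'a \<Rightarrow> 'a \<Rightarrow> 'a" where
  "ogd_polyak_step R eta rho g xt gradft st =
     (let y = xt - eta *\<^sub>R gradft in
      if st \<noteq> 0
      then closest_point (cball 0 R)
             (y - (pos_part (g xt + inner st (y - xt) + rho) / (norm st)\<^sup>2) *\<^sub>R st)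
      else closest_point (cball 0 R) y)"

definition regret :: "nat \<Rightarrow> (nat \<Rightarrow> 'a \<Rightarrow> real) \<Rightarrow> (nat \<Rightarrow> 'a) \<Rightarrow> 'a set \<Rightarrow> real" where
  "regret T f x X = (\<Sum>t=1..T. f t (x t)) - (INF u\<in>X. \<Sum>t=1..T. f t u)"

end

theory Submission
  imports Defs
begin

text \<open>
  Let \<open>K = {g \<le> -\<rho>}\<close>. Condition (A4) makes \<open>g\<close> sharp: every point \<open>y\<close> lies within
  \<open>[g y + \<rho>]\<^sub>+ / \<sigma>\<close> of \<open>K\<close>. The Polyak step is the projection onto a halfspace containing \<open>K\<close>,
  so it shrinks the distance to \<open>K\<close> by the factor \<open>\<surd>\<gamma>\<close>, while the gradient step moves by at
  most \<open>\<eta> G\<^sub>f = \<xi> \<rho> / G\<^sub>g\<close>. Hence \<open>dist(x\<^sub>t, K) \<le> \<rho> / G\<^sub>g\<close> is invariant, and since \<open>g\<close> is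
  \<open>G\<^sub>g\<close>-Lipschitz on the ball, every iterate is feasible. As neither projection moves away from
  \<open>K\<close>, the usual analysis of online gradient descent applies against a comparator \<open>u' \<in> K\<close>
  within \<open>\<rho> / \<sigma>\<close> of any feasible \<open>u\<close>; replacing \<open>u\<close> by \<open>u'\<close> costs \<open>G\<^sub>f \<rho> / \<sigma>\<close> per round.
\<close>

lemma pos_part_nonneg [simp]: "0 \<le> pos_part a"
  by (simp add: pos_part_def)

lemma pos_part_eq_self: "0 \<le> a \<Longrightarrow> pos_part a = a"
  by (simp add: pos_part_def)

lemma pos_part_eq_0: "a \<le> 0 \<Longrightarrow> pos_part a = 0"
  by (simp add: pos_part_def)

subsection \<open>Subgradients\<close>

lemma subdiffD: "v \<in> subdiff g x \<Longrightarrow> g x + inner v (y - x) \<le> g y"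
  by (simp add: subdiff_def)

lemma zero_in_subdiff_iff: "0 \<in> subdiff g x \<longleftrightarrow> (\<forall>y. g x \<le> g y)"
  by (simp add: subdiff_def)

lemma subgradient_Lipschitz_bound:
  assumes "v \<in> subdiff g x"
  shows "g x \<le> g y + norm v * norm (x - y)"
proof -
  have "- inner v (y - x) \<le> norm v * norm (x - y)"
    using norm_cauchy_schwarz[of v "x - y"] by (simp add: inner_diff_right)
  then show ?thesis
    using subdiffD[OF assms, of y] by simp
qed

lemma gradient_in_subdiff:
  fixes f :: "'a::real_inner \<Rightarrow> real"
  assumes cvx: "convex_on UNIV f" and der: "(f has_derivative (\<lambda>h. inner G h)) (at z)"
  shows "G \<in> subdiff f z"
  unfolding subdiff_def
proof (intro CollectI allI)
  fix w
  define d where "d = w - z"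
  define \<phi> where "\<phi> = (\<lambda>t::real. f (z + t *\<^sub>R d))"
  have "convex_on UNIV \<phi>"
  proof (rule convex_onI)
    fix t a b :: real
    assume t: "0 < t" "t < 1"
    have "z + ((1 - t) * a + t * b) *\<^sub>R d = (1 - t) *\<^sub>R (z + a *\<^sub>R d) + t *\<^sub>R (z + b *\<^sub>R d)"
      by (simp add: algebra_simps)
    then show "\<phi> ((1 - t) *\<^sub>R a + t *\<^sub>R b) \<le> (1 - t) * \<phi> a + t * \<phi> b"
      unfolding \<phi>_def using convex_onD[OF cvx, of t "z + a *\<^sub>R d" "z + b *\<^sub>R d"] t by simp
  qed simp
  moreover have "(\<phi> has_field_derivative inner G d) (at 0)"
  proof -
    have line: "((\<lambda>t::real. z + t *\<^sub>R d) has_derivative (\<lambda>t. t *\<^sub>R d)) (at 0)"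
      by (auto intro!: derivative_eq_intros)
    have "(f has_derivative (\<lambda>h. inner G h)) (at (z + 0 *\<^sub>R d))"
      using der by simp
    from has_derivative_compose[OF line this]
    have "(\<phi> has_derivative (\<lambda>t. inner G (t *\<^sub>R d))) (at 0)"
      unfolding \<phi>_def by (simp add: o_def)
    moreover have "(\<lambda>t. inner G (t *\<^sub>R d)) = (*) (inner G d)"
      by (auto simp: fun_eq_iff)
    ultimately show ?thesis
      unfolding has_field_derivative_def by simp
  qed
  ultimately have "inner G d * (1 - 0) \<le> \<phi> 1 - \<phi> 0"
    using convex_on_imp_above_tangent[OF _ connected_UNIV, of \<phi> 0 1 "inner G d"] by simp
  then show "f z + inner G (w - z) \<le> f w"
    unfolding \<phi>_def d_def by simp
qed

lemma exists_below_level: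
  assumes "g z = c" "\<sigma> > 0" "\<And>z v. g z = c \<Longrightarrow> v \<in> subdiff g z \<Longrightarrow> \<sigma> \<le> norm v"
  obtains w where "g w < c"
  using assms zero_in_subdiff_iff[of g z] by (metis norm_zero not_le)

subsection \<open>Sublevel sets of convex functions\<close>

lemma convex_sublevel:
  assumes "convex_on UNIV g"
  shows "convex {w. g w \<le> c}"
proof (rule convexI)
  fix x y :: 'a and u v :: real
  assume "x \<in> {w. g w \<le> c}" "y \<in> {w. g w \<le> c}" "0 \<le> u" "0 \<le> v" "u + v = 1"
  then show "u *\<^sub>R x + v *\<^sub>R y \<in> {w. g w \<le> c}"
    using convex_lower[OF assms, of x y u v] by auto
qed

lemma closed_sublevel:
  fixes g :: "'a::euclidean_space \<Rightarrow> real"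
  assumes "convex_on UNIV g"
  shows "closed {w. g w \<le> c}"
  using closed_Collect_le[OF convex_on_continuous[OF open_UNIV assms] continuous_on_const] by simp

text \<open>A point \<open>w\<close> of this halfspace with \<open>g w < c\<close> could be pushed further towards \<open>x\<close>
  inside \<open>{g < c}\<close>, contradicting the variational inequality of the closest point.\<close>

lemma closest_point_sublevel_normal:
  fixes g :: "'a::euclidean_space \<Rightarrow> real"
  assumes cvx: "convex_on UNIV g" and w0: "g w0 \<le> c" and x: "c < g x"
    and w: "0 \<le> inner (x - closest_point {w. g w \<le> c} x) (w - closest_point {w. g w \<le> c} x)"
  shows "c \<le> g w"
proof (rule ccontr)
  define L where "L = {w. g w \<le> c}"
  define p where "p = closest_point L x"
  define d where "d = x - p"
  have convexL: "convex L" and closedL: "closed L" and "L \<noteq> {}"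
    unfolding L_def using convex_sublevel[OF cvx] closed_sublevel[OF cvx] w0 by auto
  have "p \<in> L"
    unfolding p_def using closedL \<open>L \<noteq> {}\<close> by (rule closest_point_in_set)
  then have "d \<noteq> 0"
    using x unfolding d_def L_def by auto
  have normal: "inner d (v - p) \<le> 0" if "v \<in> L" for v
    unfolding d_def p_def using closest_point_dot[OF convexL closedL that] .
  assume "\<not> c \<le> g w"
  moreover have "isCont g w"
    using convex_on_continuous[OF open_UNIV cvx] continuous_on_eq_continuous_at by blast
  ultimately obtain \<delta> where \<delta>: "\<delta> > 0" "\<And>v. dist v w < \<delta> \<Longrightarrow> dist (g v) (g w) < c - g w"
    unfolding continuous_at_eps_delta by (metis diff_gt_0_iff_gt not_le)
  define t where "t = \<delta> / (2 * norm d)"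
  have "t > 0"
    using \<delta> \<open>d \<noteq> 0\<close> unfolding t_def by simp
  have "dist (w + t *\<^sub>R d) w = \<delta> / 2"
    using \<open>t > 0\<close> \<open>d \<noteq> 0\<close> \<delta>(1) unfolding t_def by (simp add: dist_norm)
  then have "g (w + t *\<^sub>R d) < c"
    using \<delta> by (simp add: dist_real_def abs_less_iff)
  then have "inner d (w + t *\<^sub>R d - p) \<le> 0"
    using normal L_def by auto
  moreover have "inner d (w + t *\<^sub>R d - p) = inner d (w - p) + t * inner d d"
    by (simp add: inner_diff_right inner_add_right)
  moreover have "inner d (w - p) \<ge> 0"
    using w unfolding d_def p_def L_def by auto
  moreover have "t * inner d d > 0"
    using \<open>t > 0\<close> \<open>d \<noteq> 0\<close> by simp
  ultimately show False
    by linarith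
qed

lemma convex_slope_ratio_le:
  fixes g :: "'a::real_inner \<Rightarrow> real"
  assumes cvx: "convex_on UNIV g"
    and ge: "\<And>w. inner d (w - p) = 0 \<Longrightarrow> c \<le> g w"
    and w1: "inner d (w1 - p) < 0" and w2: "inner d (w2 - p) > 0"
  shows "(g w1 - c) / inner d (w1 - p) \<le> (g w2 - c) / inner d (w2 - p)"
proof -
  define a1 a2 where "a1 = inner d (w1 - p)" and "a2 = inner d (w2 - p)"
  define l where "l = a2 / (a2 - a1)"
  have "a2 - a1 > 0"
    using w1 w2 unfolding a1_def a2_def by simp
  then have l: "0 \<le> l" "l \<le> 1" "(a2 - a1) * (1 - l) = - a1" "(a2 - a1) * l = a2"
    using w1 w2 unfolding l_def a1_def[symmetric] a2_def[symmetric] by (auto simp: field_simps)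
  define w where "w = (1 - l) *\<^sub>R w2 + l *\<^sub>R w1"
  have "w - p = (1 - l) *\<^sub>R (w2 - p) + l *\<^sub>R (w1 - p)"
    unfolding w_def by (simp add: algebra_simps)
  then have "inner d (w - p) = (1 - l) * a2 + l * a1"
    unfolding a1_def a2_def by (simp add: inner_add_right)
  also have "\<dots> = ((a2 - a1) * (1 - l) * a2 + (a2 - a1) * l * a1) / (a2 - a1)"
    using \<open>a2 - a1 > 0\<close> by (simp add: field_simps)
  also have "\<dots> = 0"
    using l(3,4) by simp
  finally have "c \<le> g w"
    by (rule ge)
  also have "\<dots> \<le> (1 - l) * g w2 + l * g w1"
    unfolding w_def using convex_onD[OF cvx l(1,2), of w2 w1] by simp
  finally have "0 \<le> (1 - l) * (g w2 - c) + l * (g w1 - c)"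
    by (simp add: algebra_simps)
  then have "0 \<le> (a2 - a1) * ((1 - l) * (g w2 - c) + l * (g w1 - c))"
    using \<open>a2 - a1 > 0\<close> by simp
  also have "\<dots> = ((a2 - a1) * (1 - l)) * (g w2 - c) + ((a2 - a1) * l) * (g w1 - c)"
    by (simp add: algebra_simps)
  also have "\<dots> = a2 * (g w1 - c) - a1 * (g w2 - c)"
    unfolding l(3,4) by simp
  finally show ?thesis
    using w1 w2 unfolding a1_def[symmetric] a2_def[symmetric]
    by (simp add: divide_simps mult.commute)
qed

text \<open>By the slope comparison above, the infimum of the slopes on the positive side of the
  hyperplane is a valid multiplier.\<close>

lemma halfspace_support_subgradient:
  fixes g :: "'a::real_inner \<Rightarrow> real"
  assumes cvx: "convex_on UNIV g" and gp: "g p = c"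
    and ge: "\<And>w. 0 \<le> inner d (w - p) \<Longrightarrow> c \<le> g w"
    and w0: "g w0 < c"
  obtains \<mu> where "\<mu> > 0" "\<mu> *\<^sub>R d \<in> subdiff g p"
proof -
  define a where "a w = inner d (w - p)" for w
  have a0: "a w0 < 0"
    using ge[of w0] w0 unfolding a_def by force
  then have "d \<noteq> 0"
    unfolding a_def by auto
  then have "a (p + d) > 0"
    unfolding a_def by simp
  have slope: "(g w1 - c) / a w1 \<le> (g w2 - c) / a w2" if "a w1 < 0" "a w2 > 0" for w1 w2
    using that unfolding a_def by (intro convex_slope_ratio_le[OF cvx]) (auto intro: ge)
  define S where "S = {(g w - c) / a w | w. a w > 0}"
  define \<mu> where "\<mu> = Inf S"
  have "S \<noteq> {}"
    using \<open>a (p + d) > 0\<close> unfolding S_def by auto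
  have below: "(g w1 - c) / a w1 \<le> \<mu>" if "a w1 < 0" for w1
    unfolding \<mu>_def using \<open>S \<noteq> {}\<close> by (rule cInf_greatest) (use slope[OF that] S_def in blast)
  have above: "\<mu> \<le> (g w2 - c) / a w2" if "a w2 > 0" for w2
  proof -
    have "bdd_below S"
      unfolding S_def bdd_below_def using slope[OF a0] by blast
    moreover have "(g w2 - c) / a w2 \<in> S"
      using that S_def by blast
    ultimately show ?thesis
      unfolding \<mu>_def by (rule cInf_lower[rotated])
  qed
  have "0 < (g w0 - c) / a w0"
    using a0 w0 by (simp add: divide_neg_neg)
  then have "\<mu> > 0"
    using below[OF a0] by simp
  moreover have multiplier: "\<mu> * a w \<le> g w - c" for w
  proof (cases "a w" "0::real" rule: linorder_cases)
    case less
    then show ?thesis using below[OF less] by (simp add: divide_le_eq mult.commute)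
  next
    case equal
    then show ?thesis using ge[of w] unfolding a_def by simp
  next
    case greater
    then show ?thesis using above[OF greater] by (simp add: le_divide_eq mult.commute)
  qed
  have "g p + inner (\<mu> *\<^sub>R d) (w - p) \<le> g w" for w
    using multiplier[of w] gp unfolding a_def by simp
  then have "\<mu> *\<^sub>R d \<in> subdiff g p"
    unfolding subdiff_def by blast
  ultimately show thesis
    using that by blast
qed

lemma subgradient_at_level:
  fixes g :: "'a::euclidean_space \<Rightarrow> real"
  assumes cvx: "convex_on UNIV g" and w0: "g w0 < c" and x: "c < g x"
  obtains p v where "g p = c" "v \<in> subdiff g p" "c + norm v * norm (x - p) \<le> g x"
proof -
  define p where "p = closest_point {w. g w \<le> c} x"
  have "{w. g w \<le> c} \<noteq> {}"
    using w0 less_imp_le by blast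
  then have "g p \<le> c"
    using closest_point_in_set[OF closed_sublevel[OF cvx], of c x] unfolding p_def by blast
  have normal: "c \<le> g w" if "0 \<le> inner (x - p) (w - p)" for w
    using closest_point_sublevel_normal[OF cvx less_imp_le[OF w0] x] that unfolding p_def .
  have gp: "g p = c"
    using normal[of p] \<open>g p \<le> c\<close> by simp
  obtain \<mu> where \<mu>: "\<mu> > 0" "\<mu> *\<^sub>R (x - p) \<in> subdiff g p"
    using halfspace_support_subgradient[OF cvx gp normal w0] by blast
  have "norm (\<mu> *\<^sub>R (x - p)) * norm (x - p) = inner (\<mu> *\<^sub>R (x - p)) (x - p)"
    using \<mu>(1) by (simp add: power2_norm_eq_inner[symmetric] power2_eq_square)
  then have "c + norm (\<mu> *\<^sub>R (x - p)) * norm (x - p) \<le> g x"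
    using subdiffD[OF \<mu>(2), of x] gp by simp
  then show thesis
    using that gp \<mu>(2) by blast
qed

text \<open>The witness lies on the segment from \<open>y\<close> to the level-\<open>c\<close> point given by the previous
  lemma.\<close>

lemma sublevel_error_bound:
  fixes g :: "'a::euclidean_space \<Rightarrow> real"
  assumes cvx: "convex_on UNIV g" and w0: "g w0 < c" and "c \<le> b"
    and sharp: "\<And>p v. g p = c \<Longrightarrow> v \<in> subdiff g p \<Longrightarrow> \<sigma> \<le> norm v"
  obtains k where "g k \<le> b" "\<sigma> * norm (y - k) \<le> pos_part (g y - b)"
proof (cases "g y \<le> b")
  case True
  then show thesis
    using that[of y] by simp
next
  case False
  then have "c < g y"
    using \<open>c \<le> b\<close> by simp
  then obtain p v where pv: "g p = c" "v \<in> subdiff g p" "c + norm v * norm (y - p) \<le> g y"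
    using subgradient_at_level[OF cvx w0] by blast
  have "\<sigma> * norm (y - p) \<le> norm v * norm (y - p)"
    using sharp[OF pv(1,2)] by (simp add: mult_right_mono)
  then have dist_p: "\<sigma> * norm (y - p) \<le> g y - c"
    using pv(3) by simp
  define l where "l = (g y - b) / (g y - c)"
  have l: "0 \<le> l" "l \<le> 1"
    unfolding l_def using False \<open>c \<le> b\<close> by auto
  define k where "k = (1 - l) *\<^sub>R y + l *\<^sub>R p"
  have "g k \<le> (1 - l) * g y + l * g p"
    unfolding k_def using convex_onD[OF cvx l] by simp
  also have "\<dots> = g y - l * (g y - c)"
    using pv(1) by (simp add: algebra_simps)
  also have "\<dots> = b"
    using \<open>c < g y\<close> unfolding l_def by simp
  finally have "g k \<le> b" .
  have "y - k = l *\<^sub>R (y - p)"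
    unfolding k_def by (simp add: algebra_simps)
  then have "\<sigma> * norm (y - k) = l * (\<sigma> * norm (y - p))"
    using l by simp
  also have "\<dots> \<le> l * (g y - c)"
    using dist_p l by (simp add: mult_left_mono)
  also have "\<dots> = pos_part (g y - b)"
    using False \<open>c < g y\<close> unfolding l_def by (simp add: pos_part_eq_self)
  finally show thesis
    using that \<open>g k \<le> b\<close> by blast
qed

subsection \<open>Projection onto a halfspace\<close>

text \<open>For \<open>s \<noteq> 0\<close> this is the projection onto \<open>{w. inner s w \<le> b}\<close>; for \<open>s = 0\<close> it is the
  identity, because division by zero yields zero.\<close>

definition halfspace_proj :: "'a::real_inner \<Rightarrow> real \<Rightarrow> 'a \<Rightarrow> 'a" where
  "halfspace_proj s b w = w - (pos_part (inner s w - b) / (norm s)\<^sup>2) *\<^sub>R s"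

lemma closest_point_eqI:
  fixes S :: "'a::euclidean_space set"
  assumes "convex S" "closed S" "x \<in> S" and normal: "\<And>z. z \<in> S \<Longrightarrow> inner (a - x) (z - x) \<le> 0"
  shows "closest_point S a = x"
proof -
  have "dist a x \<le> dist a z" if "z \<in> S" for z
  proof -
    have "(a - x) - (z - x) = a - z"
      by simp
    then have "2 * inner (a - x) (z - x) = (norm (a - x))\<^sup>2 + (norm (z - x))\<^sup>2 - (norm (a - z))\<^sup>2"
      using dot_norm_neg[of "a - x" "z - x"] by simp
    then have "(norm (a - x))\<^sup>2 \<le> (norm (a - z))\<^sup>2"
      using normal[OF that] zero_le_power2[of "norm (z - x)"] by linarith
    then show ?thesis
      unfolding dist_norm by (rule power2_le_imp_le) simp
  qed
  then have "x = closest_point S a"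
    using closest_point_unique[OF assms(1-3)] by blast
  then show ?thesis
    by simp
qed

lemma inner_halfspace_proj:
  "s \<noteq> 0 \<Longrightarrow> inner s (halfspace_proj s b x) = inner s x - pos_part (inner s x - b)"
  by (simp add: halfspace_proj_def inner_diff_right power2_norm_eq_inner)

lemma closest_point_halfspace:
  fixes s :: "'a::euclidean_space"
  assumes "s \<noteq> 0"
  shows "closest_point {w. inner s w \<le> b} x = halfspace_proj s b x"
proof (rule closest_point_eqI[OF convex_halfspace_le closed_halfspace_le])
  define h where "h = pos_part (inner s x - b)"
  have inner_proj: "inner s (halfspace_proj s b x) = inner s x - h"
    using inner_halfspace_proj[OF assms] unfolding h_def .
  then show "halfspace_proj s b x \<in> {w. inner s w \<le> b}"
    unfolding h_def pos_part_def by simp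
  fix z
  assume "z \<in> {w. inner s w \<le> b}"
  then have "h * (inner s z - inner s x + h) \<le> 0"
    unfolding h_def by (cases "0 \<le> inner s x - b") (simp_all add: pos_part_eq_self pos_part_eq_0 mult_nonneg_nonpos)
  moreover have "inner (x - halfspace_proj s b x) (z - halfspace_proj s b x)
      = h * (inner s z - inner s x + h) / (norm s)\<^sup>2"
    using inner_proj unfolding halfspace_proj_def h_def
    by (simp add: inner_diff_right diff_divide_distrib add_divide_distrib ring_distribs)
  ultimately show "inner (x - halfspace_proj s b x) (z - halfspace_proj s b x) \<le> 0"
    by (simp add: divide_nonpos_nonneg)
qed

lemma halfspace_proj_fixed: "inner s w \<le> b \<Longrightarrow> halfspace_proj s b w = w"
  by (simp add: halfspace_proj_def pos_part_eq_0)

lemma halfspace_proj_nonexpansive: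
  fixes s :: "'a::euclidean_space"
  shows "norm (halfspace_proj s b x - halfspace_proj s b y) \<le> norm (x - y)"
proof (cases "s = 0")
  case True
  then show ?thesis by (simp add: halfspace_proj_def)
next
  case False
  then have "halfspace_proj s b x \<in> {w. inner s w \<le> b}"
    using inner_halfspace_proj[OF False] by (simp add: pos_part_def)
  then have "{w. inner s w \<le> b} \<noteq> {}"
    by blast
  with False show ?thesis
    using closest_point_lipschitz[OF convex_halfspace_le closed_halfspace_le, of s b x y]
    by (simp add: closest_point_halfspace dist_norm)
qed

lemma halfspace_proj_contracts:
  assumes q: "inner s q \<le> b"
  shows "(norm (halfspace_proj s b x - q))\<^sup>2 \<le> (norm (x - q))\<^sup>2 - (pos_part (inner s x - b))\<^sup>2 / (norm s)\<^sup>2"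
proof -
  define h where "h = pos_part (inner s x - b)"
  define c where "c = h / (norm s)\<^sup>2"
  have "c * h \<le> c * inner s (x - q)"
  proof (cases "inner s x - b \<ge> 0")
    case True
    then have "h \<le> inner s (x - q)"
      using q unfolding h_def by (simp add: pos_part_eq_self inner_diff_right)
    moreover have "0 \<le> c"
      unfolding c_def h_def by simp
    ultimately show ?thesis
      by (rule mult_left_mono)
  next
    case False
    then show ?thesis
      unfolding c_def h_def by (simp add: pos_part_eq_0)
  qed
  moreover have "2 * c * h = c\<^sup>2 * (norm s)\<^sup>2 + h\<^sup>2 / (norm s)\<^sup>2"
    unfolding c_def by (cases "s = 0") (simp_all add: field_simps power2_eq_square)
  moreover have "(norm (halfspace_proj s b x - q))\<^sup>2
      = (norm (x - q))\<^sup>2 - 2 * c * inner s (x - q) + c\<^sup>2 * (norm s)\<^sup>2"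
  proof -
    have eq: "halfspace_proj s b x - q = (x - q) - c *\<^sub>R s"
      unfolding halfspace_proj_def c_def h_def by simp
    have "(norm (halfspace_proj s b x - q))\<^sup>2 = (norm ((x - q) - c *\<^sub>R s))\<^sup>2"
      by (simp only: eq)
    also have "\<dots> = (norm (x - q))\<^sup>2 - 2 * c * inner s (x - q) + c\<^sup>2 * (norm s)\<^sup>2"
      unfolding power2_norm_eq_inner
      by (simp add: inner_diff_left inner_diff_right inner_commute algebra_simps power2_eq_square)
    finally show ?thesis .
  qed
  ultimately show ?thesis
    unfolding h_def by linarith
qed

lemma ogd_polyak_step_halfspace_proj:
  "ogd_polyak_step R \<eta> \<rho> g xt G st =
     closest_point (cball 0 R) (halfspace_proj st (inner st xt - g xt - \<rho>) (xt - \<eta> *\<^sub>R G))"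
proof -
  have arg: "g xt + inner st (xt - \<eta> *\<^sub>R G - xt) + \<rho>
      = inner st (xt - \<eta> *\<^sub>R G) - (inner st xt - g xt - \<rho>)"
    by (simp add: inner_diff_right)
  show ?thesis
    unfolding ogd_polyak_step_def halfspace_proj_def Let_def arg by simp
qed

subsection \<open>Online gradient descent\<close>

lemma online_gradient_descent_regret:
  fixes x G :: "nat \<Rightarrow> 'a::real_inner"
  assumes \<eta>: "\<eta> > 0"
    and grad: "\<And>t. t \<in> {1..T} \<Longrightarrow> G t \<in> subdiff (f t) (x t)"
    and grad_bound: "\<And>t. t \<in> {1..T} \<Longrightarrow> norm (G t) \<le> L"
    and closer: "\<And>t. t \<in> {1..T} \<Longrightarrow> norm (x (Suc t) - u) \<le> norm (x t - \<eta> *\<^sub>R G t - u)"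
  shows "(\<Sum>t=1..T. f t (x t) - f t u) \<le> (norm (x 1 - u))\<^sup>2 / (2 * \<eta>) + real T * (\<eta> * L\<^sup>2 / 2)"
proof -
  define a where "a t = (norm (x t - u))\<^sup>2" for t
  have step: "f t (x t) - f t u \<le> (a t - a (Suc t)) / (2 * \<eta>) + \<eta> * L\<^sup>2 / 2"
    if t: "t \<in> {1..T}" for t
  proof -
    have "a (Suc t) \<le> (norm ((x t - u) - \<eta> *\<^sub>R G t))\<^sup>2"
      using closer[OF t] unfolding a_def by (simp add: power_mono algebra_simps)
    also have "\<dots> = a t - 2 * \<eta> * inner (G t) (x t - u) + \<eta>\<^sup>2 * (norm (G t))\<^sup>2"
      unfolding a_def power2_norm_eq_inner
      by (simp add: inner_diff_left inner_diff_right inner_commute algebra_simps power2_eq_square)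
    also have "\<dots> \<le> a t - 2 * \<eta> * inner (G t) (x t - u) + \<eta>\<^sup>2 * L\<^sup>2"
      using power_mono[OF grad_bound[OF t] norm_ge_zero, of 2] by (simp add: mult_left_mono)
    finally have "inner (G t) (x t - u) \<le> (a t - a (Suc t)) / (2 * \<eta>) + \<eta> * L\<^sup>2 / 2"
      using \<eta> by (simp add: field_simps power2_eq_square)
    moreover have "f t (x t) - f t u \<le> inner (G t) (x t - u)"
      using subdiffD[OF grad[OF t], of u] by (simp add: inner_diff_right)
    ultimately show ?thesis
      by linarith
  qed
  have "(\<Sum>t=1..T. f t (x t) - f t u) \<le> (\<Sum>t=1..T. (a t - a (Suc t)) / (2 * \<eta>) + \<eta> * L\<^sup>2 / 2)"
    using step by (rule sum_mono)
  also have "\<dots> = (a 1 - a (Suc T)) / (2 * \<eta>) + real T * (\<eta> * L\<^sup>2 / 2)"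
    using sum_Suc_diff[of 1 T "\<lambda>t. - a t"]
    by (simp add: sum.distrib flip: sum_divide_distrib)
  also have "\<dots> \<le> a 1 / (2 * \<eta>) + real T * (\<eta> * L\<^sup>2 / 2)"
    using \<eta> unfolding a_def by (simp add: divide_right_mono)
  finally show ?thesis
    unfolding a_def .
qed

subsection \<open>The algorithm\<close>

locale ogd_polyak_run =
  fixes g :: "'a::euclidean_space \<Rightarrow> real"
    and f :: "nat \<Rightarrow> 'a \<Rightarrow> real"
    and gradf :: "nat \<Rightarrow> 'a \<Rightarrow> 'a"
    and x s :: "nat \<Rightarrow> 'a"
    and T :: nat
    and R Gg Gf \<sigma> \<epsilon> \<eta> \<rho> :: real
  assumes g_convex: "convex_on UNIV g"
    and feasible_bounded: "{z. g z \<le> 0} \<subseteq> cball 0 R"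
    and f_convex: "\<And>t. t \<in> {1..T} \<Longrightarrow> convex_on UNIV (f t)"
    and f_grad: "\<And>t z. t \<in> {1..T} \<Longrightarrow> (f t has_derivative (\<lambda>h. inner (gradf t z) h)) (at z)"
    and gradf_bounded: "\<And>t z. t \<in> {1..T} \<Longrightarrow> g z \<le> 0 \<Longrightarrow> norm (gradf t z) \<le> Gf"
    and Gg_pos: "Gg > 0"
    and subdiff_bounded: "\<And>z v. z \<in> cball 0 R \<Longrightarrow> v \<in> subdiff g z \<Longrightarrow> norm v \<le> Gg"
    and sigma_pos: "\<sigma> > 0"
    and level_nonempty: "{z. g z = - \<epsilon>} \<noteq> {}"
    and level_sharp: "\<And>z v. g z = - \<epsilon> \<Longrightarrow> v \<in> subdiff g z \<Longrightarrow> norm v \<ge> \<sigma>"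
    and rho: "0 < \<rho>" "\<rho> \<le> \<epsilon>"
    and x1: "g (x 1) \<le> - \<rho>"
    and s_sub: "\<And>t. t \<in> {1..T} \<Longrightarrow> s t \<in> subdiff g (x t)"
    and x_step: "\<And>t. t \<in> {1..T} \<Longrightarrow>
        x (Suc t) = ogd_polyak_step R \<eta> \<rho> g (x t) (gradf t (x t)) (s t)"
    and eta_pos: "\<eta> > 0"
    and eta_le: "\<eta> * Gf * Gg \<le> (1 - sqrt (1 - \<sigma>\<^sup>2 / Gg\<^sup>2)) * \<rho>"
begin

definition polyak_proj :: "nat \<Rightarrow> 'a \<Rightarrow> 'a" where
  "polyak_proj t = halfspace_proj (s t) (inner (s t) (x t) - g (x t) - \<rho>)"

lemma x_Suc: "t \<in> {1..T} \<Longrightarrow>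
    x (Suc t) = closest_point (cball 0 R) (polyak_proj t (x t - \<eta> *\<^sub>R gradf t (x t)))"
  using x_step by (simp add: ogd_polyak_step_halfspace_proj polyak_proj_def)

lemma below_level: obtains w0 where "g w0 < - \<epsilon>"
proof -
  obtain z where z: "g z = - \<epsilon>"
    using level_nonempty by blast
  show thesis
    by (rule exists_below_level[where g = g, OF z sigma_pos]) (use level_sharp that in auto)
qed

lemma error_bound:
  fixes y :: 'a
  obtains k where "g k \<le> - \<rho>" "\<sigma> * norm (y - k) \<le> pos_part (g y + \<rho>)"
proof -
  obtain w0 where w0: "g w0 < - \<epsilon>"
    using below_level .
  have "- \<epsilon> \<le> - \<rho>"
    using rho by simp
  then show thesis
    by (rule sublevel_error_bound[OF g_convex w0]) (use level_sharp that in auto)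
qed

lemma sigma_le_Gg: "\<sigma> \<le> Gg"
proof -
  obtain b :: 'a where b: "b \<in> Basis"
    using nonempty_Basis by blast
  have "(\<bar>R\<bar> + 1) *\<^sub>R b \<notin> cball 0 R"
    using b by simp
  then have "0 < g ((\<bar>R\<bar> + 1) *\<^sub>R b)"
    using feasible_bounded by (meson mem_Collect_eq not_le subsetD)
  then have "- \<epsilon> < g ((\<bar>R\<bar> + 1) *\<^sub>R b)"
    using rho by linarith
  moreover obtain w0 where "g w0 < - \<epsilon>"
    using below_level .
  ultimately obtain p v where pv: "g p = - \<epsilon>" "v \<in> subdiff g p"
    using subgradient_at_level[OF g_convex] by blast
  then have "g p \<le> 0"
    using rho by simp
  then have "p \<in> cball 0 R"
    using feasible_bounded by blast
  then show ?thesis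
    using level_sharp[OF pv] subdiff_bounded[OF _ pv(2)] by simp
qed

lemma sublevel_sub_cball: "{w. g w \<le> - \<rho>} \<subseteq> cball 0 R"
  using feasible_bounded rho by force

lemma sublevel_closed_nonempty: "closed {w. g w \<le> - \<rho>}" "{w. g w \<le> - \<rho>} \<noteq> {}"
  using closed_sublevel[OF g_convex] x1 by auto

lemma sublevel_in_halfspace:
  "t \<in> {1..T} \<Longrightarrow> g w \<le> - \<rho> \<Longrightarrow> inner (s t) w \<le> inner (s t) (x t) - g (x t) - \<rho>"
  using subdiffD[OF s_sub, of t w] by (simp add: inner_diff_right)

lemma x_Suc_closer:
  assumes t: "t \<in> {1..T}" and w: "g w \<le> - \<rho>"
  shows "norm (x (Suc t) - w) \<le> norm (polyak_proj t (x t - \<eta> *\<^sub>R gradf t (x t)) - w)"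
proof -
  have "w \<in> cball 0 R"
    using sublevel_sub_cball w by blast
  then have "cball (0::'a) R \<noteq> {}"
    by blast
  then have "dist (closest_point (cball 0 R) (polyak_proj t (x t - \<eta> *\<^sub>R gradf t (x t))))
      (closest_point (cball 0 R) w) \<le> dist (polyak_proj t (x t - \<eta> *\<^sub>R gradf t (x t))) w"
    by (rule closest_point_lipschitz[OF convex_cball closed_cball])
  then show ?thesis
    unfolding x_Suc[OF t] closest_point_self[OF \<open>w \<in> cball 0 R\<close>] dist_norm .
qed

lemma feasible_if_near_sublevel:
  assumes t: "t \<in> {1..T}" and xt: "x t \<in> cball 0 R"
    and near: "infdist (x t) {w. g w \<le> - \<rho>} \<le> \<rho> / Gg"
  shows "g (x t) \<le> 0"
proof -
  obtain q where q: "q \<in> {w. g w \<le> - \<rho>}" "infdist (x t) {w. g w \<le> - \<rho>} = dist (x t) q"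
    using infdist_attains_inf[OF sublevel_closed_nonempty] by blast
  have "g (x t) \<le> g q + norm (s t) * norm (x t - q)"
    by (rule subgradient_Lipschitz_bound[OF s_sub[OF t]])
  also have "\<dots> \<le> - \<rho> + Gg * (\<rho> / Gg)"
    using q near subdiff_bounded[OF xt s_sub[OF t]] Gg_pos
    by (intro add_mono mult_mono) (auto simp: dist_norm)
  also have "\<dots> = 0"
    using Gg_pos by simp
  finally show ?thesis .
qed

lemma sigma_infdist_sublevel_le: "\<sigma> * infdist y {w. g w \<le> - \<rho>} \<le> pos_part (g y + \<rho>)"
proof -
  obtain k where k: "g k \<le> - \<rho>" "\<sigma> * norm (y - k) \<le> pos_part (g y + \<rho>)"
    by (rule error_bound)
  have "infdist y {w. g w \<le> - \<rho>} \<le> norm (y - k)"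
    using infdist_le[of k "{w. g w \<le> - \<rho>}" y] k(1) by (simp add: dist_norm)
  then have "\<sigma> * infdist y {w. g w \<le> - \<rho>} \<le> \<sigma> * norm (y - k)"
    using sigma_pos by simp
  then show ?thesis
    using k(2) by linarith
qed

lemma polyak_proj_contracts:
  assumes t: "t \<in> {1..T}" and xt: "x t \<in> cball 0 R"
    and q: "g q \<le> - \<rho>" "infdist (x t) {w. g w \<le> - \<rho>} = dist (x t) q"
  shows "norm (polyak_proj t (x t) - q) \<le> sqrt (1 - \<sigma>\<^sup>2 / Gg\<^sup>2) * dist (x t) q"
proof -
  define D where "D = dist (x t) q"
  define h where "h = pos_part (g (x t) + \<rho>)"
  have "0 \<le> D"
    unfolding D_def by simp
  have "\<sigma> * D \<le> h"
    using sigma_infdist_sublevel_le[of "x t"] q(2) unfolding D_def h_def by simp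
  have "(\<sigma> * D)\<^sup>2 / Gg\<^sup>2 \<le> h\<^sup>2 / (norm (s t))\<^sup>2"
  proof (cases "s t = 0")
    case True
    then have "g (x t) \<le> g q"
      using subdiffD[OF s_sub[OF t], of q] by simp
    then have "h = 0"
      using q(1) unfolding h_def by (simp add: pos_part_eq_0)
    then have "(\<sigma> * D)\<^sup>2 = 0"
      using \<open>\<sigma> * D \<le> h\<close> \<open>0 \<le> D\<close> sigma_pos by (auto simp: mult_le_0_iff)
    then show ?thesis
      by auto
  next
    case False
    have "(\<sigma> * D)\<^sup>2 \<le> h\<^sup>2"
      using \<open>\<sigma> * D \<le> h\<close> \<open>0 \<le> D\<close> sigma_pos by (intro power_mono) auto
    moreover have "(norm (s t))\<^sup>2 \<le> Gg\<^sup>2"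
      using subdiff_bounded[OF xt s_sub[OF t]] by (simp add: power_mono)
    ultimately show ?thesis
      using False by (intro frac_le) auto
  qed
  have "(norm (polyak_proj t (x t) - q))\<^sup>2 \<le> D\<^sup>2 - h\<^sup>2 / (norm (s t))\<^sup>2"
    using halfspace_proj_contracts[OF sublevel_in_halfspace[OF t q(1)], of "x t"]
    unfolding polyak_proj_def h_def D_def by (simp add: dist_norm)
  also have "\<dots> \<le> (1 - \<sigma>\<^sup>2 / Gg\<^sup>2) * D\<^sup>2"
    using \<open>(\<sigma> * D)\<^sup>2 / Gg\<^sup>2 \<le> h\<^sup>2 / (norm (s t))\<^sup>2\<close> by (simp add: power_mult_distrib algebra_simps)
  finally have "norm (polyak_proj t (x t) - q) \<le> sqrt ((1 - \<sigma>\<^sup>2 / Gg\<^sup>2) * D\<^sup>2)"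
    by (rule real_le_rsqrt)
  then show ?thesis
    using \<open>0 \<le> D\<close> unfolding D_def by (simp add: real_sqrt_mult)
qed

lemma near_sublevel_step:
  assumes t: "t \<in> {1..T}" and xt: "x t \<in> cball 0 R"
    and near: "infdist (x t) {w. g w \<le> - \<rho>} \<le> \<rho> / Gg"
  shows "x (Suc t) \<in> cball 0 R \<and> infdist (x (Suc t)) {w. g w \<le> - \<rho>} \<le> \<rho> / Gg"
proof
  have "cball (0::'a) R \<noteq> {}"
    using xt by blast
  then show "x (Suc t) \<in> cball 0 R"
    unfolding x_Suc[OF t] by (rule closest_point_in_set[OF closed_cball])
  obtain q where q: "g q \<le> - \<rho>" "infdist (x t) {w. g w \<le> - \<rho>} = dist (x t) q"
    using infdist_attains_inf[OF sublevel_closed_nonempty] by blast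
  define y where "y = x t - \<eta> *\<^sub>R gradf t (x t)"
  define P where "P = polyak_proj t"
  have "norm (gradf t (x t)) \<le> Gf"
    using gradf_bounded[OF t feasible_if_near_sublevel[OF t xt near]] .
  then have "norm (y - x t) \<le> \<eta> * Gf"
    using eta_pos unfolding y_def by simp
  then have "norm (P y - P (x t)) \<le> \<eta> * Gf"
    using halfspace_proj_nonexpansive[of _ _ y "x t"] unfolding P_def polyak_proj_def
    by (meson order_trans)
  moreover have "\<eta> * Gf \<le> (1 - sqrt (1 - \<sigma>\<^sup>2 / Gg\<^sup>2)) * \<rho> / Gg"
    using eta_le Gg_pos by (simp add: le_divide_eq)
  moreover have "norm (P (x t) - q) \<le> sqrt (1 - \<sigma>\<^sup>2 / Gg\<^sup>2) * (\<rho> / Gg)"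
  proof -
    have "0 \<le> 1 - \<sigma>\<^sup>2 / Gg\<^sup>2"
      using sigma_le_Gg sigma_pos Gg_pos by (simp add: field_simps power_mono)
    then have "sqrt (1 - \<sigma>\<^sup>2 / Gg\<^sup>2) * dist (x t) q \<le> sqrt (1 - \<sigma>\<^sup>2 / Gg\<^sup>2) * (\<rho> / Gg)"
      using near q(2) by (intro mult_left_mono) auto
    then show ?thesis
      using polyak_proj_contracts[OF t xt q] unfolding P_def by linarith
  qed
  moreover have "(1 - sqrt (1 - \<sigma>\<^sup>2 / Gg\<^sup>2)) * \<rho> / Gg + sqrt (1 - \<sigma>\<^sup>2 / Gg\<^sup>2) * (\<rho> / Gg) = \<rho> / Gg"
    by (simp add: diff_divide_distrib left_diff_distrib)
  ultimately have "norm (P y - P (x t)) + norm (P (x t) - q) \<le> \<rho> / Gg"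
    by linarith
  moreover have "infdist (x (Suc t)) {w. g w \<le> - \<rho>} \<le> norm (x (Suc t) - q)"
    using infdist_le[of q "{w. g w \<le> - \<rho>}" "x (Suc t)"] q(1) by (simp add: dist_norm)
  moreover have "norm (x (Suc t) - q) \<le> norm (P y - P (x t)) + norm (P (x t) - q)"
    using x_Suc_closer[OF t q(1)] dist_triangle[of "P y" q "P (x t)"]
    unfolding P_def y_def by (simp add: dist_norm)
  ultimately show "infdist (x (Suc t)) {w. g w \<le> - \<rho>} \<le> \<rho> / Gg"
    by linarith
qed

lemma near_sublevel:
  "t \<in> {1..T} \<Longrightarrow> x t \<in> cball 0 R \<and> infdist (x t) {w. g w \<le> - \<rho>} \<le> \<rho> / Gg"
proof (induction t)
  case (Suc n)
  show ?case
  proof (cases "n = 0")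
    case True
    have "x 1 \<in> {w. g w \<le> - \<rho>}"
      using x1 by simp
    then show ?thesis
      using True sublevel_sub_cball rho Gg_pos by auto
  next
    case False
    then have "n \<in> {1..T}"
      using Suc.prems by simp
    then show ?thesis
      using Suc.IH near_sublevel_step by blast
  qed
qed simp

lemma feasible: "t \<in> {1..T} \<Longrightarrow> g (x t) \<le> 0"
  using feasible_if_near_sublevel near_sublevel by blast

lemma regret_against_sublevel_point:
  assumes u: "g u \<le> - \<rho>"
  shows "(\<Sum>t=1..T. f t (x t) - f t u) \<le> 2 * R\<^sup>2 / \<eta> + real T * (\<eta> * Gf\<^sup>2 / 2)"
proof -
  have "(\<Sum>t=1..T. f t (x t) - f t u) \<le> (norm (x 1 - u))\<^sup>2 / (2 * \<eta>) + real T * (\<eta> * Gf\<^sup>2 / 2)"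
  proof (rule online_gradient_descent_regret[OF eta_pos])
    fix t
    assume t: "t \<in> {1..T}"
    show "gradf t (x t) \<in> subdiff (f t) (x t)"
      by (rule gradient_in_subdiff[OF f_convex[OF t] f_grad[OF t]])
    show "norm (gradf t (x t)) \<le> Gf"
      using gradf_bounded[OF t feasible[OF t]] .
    show "norm (x (Suc t) - u) \<le> norm (x t - \<eta> *\<^sub>R gradf t (x t) - u)"
      using x_Suc_closer[OF t u] halfspace_proj_nonexpansive
        halfspace_proj_fixed[OF sublevel_in_halfspace[OF t u]]
      unfolding polyak_proj_def by (metis order_trans)
  qed
  moreover have "x 1 \<in> cball 0 R" "u \<in> cball 0 R"
    using sublevel_sub_cball x1 u by auto
  then have "norm (x 1 - u) \<le> 2 * R"
    using norm_triangle_ineq4[of "x 1" u] by simp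
  then have "(norm (x 1 - u))\<^sup>2 / (2 * \<eta>) \<le> (2 * R)\<^sup>2 / (2 * \<eta>)"
    using eta_pos by (intro divide_right_mono power_mono) auto
  ultimately show ?thesis
    using eta_pos by (simp add: power_mult_distrib)
qed

lemma comparator_shift:
  assumes u: "g u \<le> 0"
  obtains u' where "g u' \<le> - \<rho>" "(\<Sum>t=1..T. f t u' - f t u) \<le> real T * (Gf * \<rho> / \<sigma>)"
proof -
  obtain u' where u': "g u' \<le> - \<rho>" "\<sigma> * norm (u - u') \<le> pos_part (g u + \<rho>)"
    by (rule error_bound)
  have "pos_part (g u + \<rho>) \<le> \<rho>"
    using u rho by (simp add: pos_part_def)
  then have "norm (u' - u) \<le> \<rho> / \<sigma>"
    using u'(2) sigma_pos by (simp add: field_simps norm_minus_commute)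
  have "f t u' - f t u \<le> Gf * \<rho> / \<sigma>" if t: "t \<in> {1..T}" for t
  proof -
    have "norm (gradf t u') \<le> Gf"
      using gradf_bounded[OF t] u'(1) rho by simp
    with \<open>norm (u' - u) \<le> \<rho> / \<sigma>\<close> have "norm (gradf t u') * norm (u' - u) \<le> Gf * (\<rho> / \<sigma>)"
      by (intro mult_mono) (auto intro: order_trans[OF norm_ge_zero])
    then show ?thesis
      using subgradient_Lipschitz_bound[OF gradient_in_subdiff[OF f_convex[OF t] f_grad[OF t, of u']], of u]
      by simp
  qed
  then have "(\<Sum>t=1..T. f t u' - f t u) \<le> real T * (Gf * \<rho> / \<sigma>)"
    using sum_mono[of "{1..T}" "\<lambda>t. f t u' - f t u" "\<lambda>t. Gf * \<rho> / \<sigma>"] by simp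
  then show thesis
    using that u'(1) by blast
qed

lemma regret_le:
  "regret T f x {z. g z \<le> 0} \<le> 2 * R\<^sup>2 / \<eta> + real T * (\<eta> * Gf\<^sup>2 / 2) + real T * (Gf * \<rho> / \<sigma>)"
proof -
  define B where "B = 2 * R\<^sup>2 / \<eta> + real T * (\<eta> * Gf\<^sup>2 / 2) + real T * (Gf * \<rho> / \<sigma>)"
  have "(\<Sum>t=1..T. f t (x t)) - B \<le> (\<Sum>t=1..T. f t u)" if u: "g u \<le> 0" for u
  proof -
    obtain u' where "g u' \<le> - \<rho>" "(\<Sum>t=1..T. f t u' - f t u) \<le> real T * (Gf * \<rho> / \<sigma>)"
      using comparator_shift[OF u] by blast
    with regret_against_sublevel_point[of u'] show ?thesis
      unfolding B_def sum_subtractf by linarith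
  qed
  moreover have "x 1 \<in> {z. g z \<le> 0}"
    using x1 rho by simp
  ultimately have "(\<Sum>t=1..T. f t (x t)) - B \<le> (INF u\<in>{z. g z \<le> 0}. \<Sum>t=1..T. f t u)"
    by (intro cINF_greatest) blast+
  then show ?thesis
    unfolding regret_def B_def by simp
qed

end

theorem proposition2:
  fixes g :: "'a::euclidean_space \<Rightarrow> real"
    and f :: "nat \<Rightarrow> 'a \<Rightarrow> real"
    and gradf :: "nat \<Rightarrow> 'a \<Rightarrow> 'a"
    and x s :: "nat \<Rightarrow> 'a"
    and T :: nat
    and R Gg Gf \<sigma> \<epsilon> \<alpha> :: real
  assumes T_pos: "T \<ge> 1"
    and g_convex: "convex_on UNIV g"
    (* (A1) *)
    and R_pos: "R > 0"
    and A1: "{z. g z \<le> 0} \<subseteq> cball 0 R"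
    (* (A2') *)
    and f_convex: "\<And>t. t \<in> {1..T} \<Longrightarrow> convex_on UNIV (f t)"
    and f_grad: "\<And>t z. t \<in> {1..T} \<Longrightarrow> (f t has_derivative (\<lambda>h. inner (gradf t z) h)) (at z)"
    and Gf_pos: "Gf > 0"
    and A2: "\<And>t z. t \<in> {1..T} \<Longrightarrow> g z \<le> 0 \<Longrightarrow> norm (gradf t z) \<le> Gf"
    (* (A3) *)
    and Gg_pos: "Gg > 0"
    and A3: "\<And>z v. z \<in> cball 0 R \<Longrightarrow> v \<in> subdiff g z \<Longrightarrow> norm v \<le> Gg"
    (* (A4) *)
    and sigma_pos: "\<sigma> > 0" and eps_pos: "\<epsilon> > 0"
    and A4_ne: "{z. g z = - \<epsilon>} \<noteq> {}"
    and A4: "\<And>z v. g z = - \<epsilon> \<Longrightarrow> v \<in> subdiff g z \<Longrightarrow> norm v \<ge> \<sigma>"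
    (* initial point and parameters *)
    and alpha: "0 < \<alpha>" "\<alpha> \<le> \<epsilon>"
    and x1: "g (x 1) \<le> - \<alpha>"
    (* the algorithm, with rho = alpha / sqrt T and eta = xi rho / (Gf Gg) *)
    and s_sub: "\<And>t. t \<in> {1..T} \<Longrightarrow> s t \<in> subdiff g (x t)"
    and x_step: "\<And>t. t \<in> {1..T} \<Longrightarrow>
        x (Suc t) = ogd_polyak_step R
            ((1 - sqrt (1 - \<sigma>\<^sup>2 / Gg\<^sup>2)) * (\<alpha> / sqrt (real T)) / (Gf * Gg))
            (\<alpha> / sqrt (real T)) g (x t) (gradf t (x t)) (s t)"
  shows "regret T f x {z. g z \<le> 0} \<le>
           (2 * Gf * Gg * R\<^sup>2 / ((1 - sqrt (1 - \<sigma>\<^sup>2 / Gg\<^sup>2)) * \<alpha>)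
            + Gf * (1 - sqrt (1 - \<sigma>\<^sup>2 / Gg\<^sup>2)) * \<alpha> / (2 * Gg)
            + Gf * \<alpha> / \<sigma>) * sqrt (real T)
         \<and> (\<forall>t\<in>{1..T}. g (x t) \<le> 0)"
proof -
  define \<xi> where "\<xi> = 1 - sqrt (1 - \<sigma>\<^sup>2 / Gg\<^sup>2)"
  define sT where "sT = sqrt (real T)"
  define \<rho> where "\<rho> = \<alpha> / sT"
  define \<eta> where "\<eta> = \<xi> * \<rho> / (Gf * Gg)"
  have "1 \<le> sT" "real T = sT * sT"
    using T_pos unfolding sT_def by simp_all
  have "0 < \<rho>" "\<rho> \<le> \<alpha>"
    using alpha \<open>1 \<le> sT\<close> unfolding \<rho>_def by (auto simp: divide_le_eq mult_le_cancel_left1)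
  then have rho: "0 < \<rho>" "\<rho> \<le> \<epsilon>"
    using alpha by simp_all
  have "0 < \<xi>"
    using sigma_pos Gg_pos unfolding \<xi>_def by simp
  interpret ogd_polyak_run g f gradf x s T R Gg Gf \<sigma> \<epsilon> \<eta> \<rho>
  proof unfold_locales
    show "g (x 1) \<le> - \<rho>"
      using x1 \<open>\<rho> \<le> \<alpha>\<close> by simp
    show "\<And>t. t \<in> {1..T} \<Longrightarrow> x (Suc t) = ogd_polyak_step R \<eta> \<rho> g (x t) (gradf t (x t)) (s t)"
      using x_step unfolding \<eta>_def \<xi>_def \<rho>_def sT_def .
    show "0 < \<eta>"
      using \<open>0 < \<xi>\<close> rho Gf_pos Gg_pos unfolding \<eta>_def by simp
    show "\<eta> * Gf * Gg \<le> (1 - sqrt (1 - \<sigma>\<^sup>2 / Gg\<^sup>2)) * \<rho>"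
      using Gf_pos Gg_pos unfolding \<eta>_def \<xi>_def by simp
  qed (fact g_convex A1 f_convex f_grad A2 Gg_pos A3 sigma_pos A4_ne A4 rho s_sub)+
  have "2 * R\<^sup>2 / \<eta> + real T * (\<eta> * Gf\<^sup>2 / 2) + real T * (Gf * \<rho> / \<sigma>)
      = (2 * Gf * Gg * R\<^sup>2 / (\<xi> * \<alpha>) + Gf * \<xi> * \<alpha> / (2 * Gg) + Gf * \<alpha> / \<sigma>) * sqrt (real T)"
    using \<open>0 < \<xi>\<close> alpha \<open>1 \<le> sT\<close> Gf_pos Gg_pos sigma_pos
    unfolding \<eta>_def \<rho>_def \<open>real T = sT * sT\<close> sT_def[symmetric]
    by (simp add: field_simps power2_eq_square)
  then show ?thesis
    using regret_le feasible unfolding \<xi>_def by simp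
qed

end
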